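(* If $M$ is a finite monoid, then the poset $\mathscr{II}(M)$ of two-sided idempotent ideals of $M$, ordered by inclusion, is a distributive lattice, with join $I\vee J=I\cup J$ and meet $I\wedge J=\bigcup_e MeM$ ($e$ ranging over idempotents in $I\cap J$); i.e. $I\wedge(J\cup K)=(I\wedge J)\cup(I\wedge K)$ for all $I,J,K\in\mathscr{II}(M)$.
   Context: A two-sided ideal $I$ (possibly empty) is idempotent if $I=I^2=\{xy\mid x,y\in I\}$. *)

theory Defs
  imports Main
begin

text \<open>Two-sided ideals of a monoid (the type 'a), possibly empty.\<close>
definition two_sided_ideal :: "'a::monoid_mult set \<Rightarrow> bool" where
  "two_sided_ideal I \<longleftrightarrow> (\<forall>x\<in>I. \<forall>m. m * x \<in> I \<and> x * m \<in> I)"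

definition set_square :: "'a::monoid_mult set \<Rightarrow> 'a set" where
  "set_square I = {x * y | x y. x \<in> I \<and> y \<in> I}"

definition idempotent_ideal :: "'a::monoid_mult set \<Rightarrow> bool" where
  "idempotent_ideal I \<longleftrightarrow> two_sided_ideal I \<and> I = set_square I"

definition principal_ideal :: "'a::monoid_mult \<Rightarrow> 'a set" where
  "principal_ideal e = {a * e * b | a b. True}"

definition ii_meet :: "'a::monoid_mult set \<Rightarrow> 'a set \<Rightarrow> 'a set" where
  "ii_meet I J = (\<Union>e\<in>{e. e \<in> I \<inter> J \<and> e * e = e}. principal_ideal e)"

end

theory Submission
  imports Defs
begin

text \<open>Joins and meets are unions of idempotent ideals, and any union of idempotent ideals is
  again one. The content is that the meet is the largest idempotent ideal below I and J: if
  x lies in an idempotent ideal K, then K = K^n for every n, so x is a product of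
  |M| factors from K; two of its |M| + 1 prefix products coincide, p = p w with w \<in> K, and the
  idempotent power e of w satisfies p = p e, whence x \<in> MeM with e \<in> K. Distributivity
  then holds because idempotents of I \<inter> (J \<union> K) are those of I \<inter> J or of I \<inter> K.\<close>

lemma two_sided_idealD:
  assumes "two_sided_ideal I" "x \<in> I"
  shows "m * x \<in> I" "x * m \<in> I"
  using assms unfolding two_sided_ideal_def by blast+

lemma set_square_subset: "two_sided_ideal I \<Longrightarrow> set_square I \<subseteq> I"
  unfolding set_square_def using two_sided_idealD by blast

lemma set_square_mono: "I \<subseteq> J \<Longrightarrow> set_square I \<subseteq> set_square J"
  unfolding set_square_def by blast

lemma idempotent_ideal_two_sided: "idempotent_ideal I \<Longrightarrow> two_sided_ideal I"
  unfolding idempotent_ideal_def by blast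

lemma idempotent_idealI:
  assumes "two_sided_ideal I" "I \<subseteq> set_square I"
  shows "idempotent_ideal I"
  using assms set_square_subset unfolding idempotent_ideal_def by blast

lemma idempotent_ideal_Union:
  assumes "\<And>I. I \<in> F \<Longrightarrow> idempotent_ideal I"
  shows "idempotent_ideal (\<Union>F)"
proof (rule idempotent_idealI)
  show "two_sided_ideal (\<Union>F)"
    using assms unfolding idempotent_ideal_def two_sided_ideal_def by blast
  show "\<Union>F \<subseteq> set_square (\<Union>F)"
  proof
    fix x assume "x \<in> \<Union>F"
    then obtain I where "I \<in> F" "x \<in> I" by blast
    then have "x \<in> set_square I" using assms unfolding idempotent_ideal_def by blast
    with \<open>I \<in> F\<close> show "x \<in> set_square (\<Union>F)" using set_square_mono[of I "\<Union>F"] by blast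
  qed
qed

lemma idempotent_ideal_Un:
  "idempotent_ideal I \<Longrightarrow> idempotent_ideal J \<Longrightarrow> idempotent_ideal (I \<union> J)"
  using idempotent_ideal_Union[of "{I, J}"] by auto

lemma principal_ideal_subset: "two_sided_ideal I \<Longrightarrow> e \<in> I \<Longrightarrow> principal_ideal e \<subseteq> I"
  unfolding principal_ideal_def two_sided_ideal_def by blast

lemma idempotent_ideal_principal_ideal:
  assumes "e * e = e"
  shows "idempotent_ideal (principal_ideal e)"
proof (rule idempotent_idealI)
  show "two_sided_ideal (principal_ideal e)"
    unfolding two_sided_ideal_def principal_ideal_def by (auto simp: mult.assoc) (metis mult.assoc)+
  show "principal_ideal e \<subseteq> set_square (principal_ideal e)"
  proof
    fix x assume "x \<in> principal_ideal e"
    then obtain a b where "x = a * e * b" unfolding principal_ideal_def by blast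
    moreover have "(a * e * 1) * (1 * e * b) = a * (e * e) * b" by (simp add: mult.assoc)
    ultimately have "x = (a * e * 1) * (1 * e * b)" using assms by simp
    then show "x \<in> set_square (principal_ideal e)"
      unfolding set_square_def principal_ideal_def by blast
  qed
qed

lemma finite_type_repeat:
  fixes f :: "nat \<Rightarrow> 'a::finite"
  obtains i j where "i < j" "j \<le> card (UNIV :: 'a set)" "f i = f j"
proof -
  have "\<not> inj_on f {0..card (UNIV :: 'a set)}"
  proof
    assume "inj_on f {0..card (UNIV :: 'a set)}"
    then have "card {0..card (UNIV :: 'a set)} \<le> card (UNIV :: 'a set)" by (rule card_inj_on_le) auto
    then show False by simp
  qed
  then obtain i j where "i \<le> card (UNIV :: 'a set)" "j \<le> card (UNIV :: 'a set)" "i \<noteq> j" "f i = f j"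
    unfolding inj_on_def by auto
  then show thesis using that by (metis linorder_neqE_nat)
qed

lemma power_periodic:
  fixes w :: "'a::monoid_mult"
  assumes "w ^ a = w ^ (a + p)" "a \<le> k"
  shows "w ^ (k + t * p) = w ^ k"
proof -
  have "w ^ (a + t * p) = w ^ a"
  proof (induction t)
    case (Suc t)
    have "a + Suc t * p = (a + t * p) + p" by simp
    then have "w ^ (a + Suc t * p) = w ^ (a + t * p) * w ^ p" by (simp only: power_add)
    also have "\<dots> = w ^ (a + p)" using Suc by (simp add: power_add)
    finally show ?case using assms(1) by simp
  qed simp
  then have "w ^ (k - a) * w ^ (a + t * p) = w ^ (k - a) * w ^ a" by simp
  with assms(2) show ?thesis by (simp flip: power_add)
qed

lemma finite_monoid_idempotent_power:
  fixes w :: "'a::{monoid_mult, finite}"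
  obtains n where "w ^ Suc n * w ^ Suc n = w ^ Suc n"
proof -
  obtain a b where "a < b" "w ^ a = w ^ b" using finite_type_repeat[of "power w"] by blast
  then have period: "w ^ a = w ^ (a + (b - a))" by simp
  \<comment> \<open>a multiple of the period b - a beyond the preperiod a\<close>
  define m where "m = (a + 1) * (b - a)"
  have "(a + 1) * 1 \<le> m" unfolding m_def using \<open>a < b\<close> by (intro mult_le_mono2) simp
  then have "m \<ge> a + 1" by simp
  have "w ^ m * w ^ m = w ^ (m + (a + 1) * (b - a))"
    unfolding m_def by (simp only: power_add)
  also have "\<dots> = w ^ m" using power_periodic[OF period, of m "a + 1"] \<open>m \<ge> a + 1\<close> by linarith
  finally have "w ^ m * w ^ m = w ^ m" .
  moreover have "m = Suc (m - 1)" using \<open>m \<ge> a + 1\<close> by simp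
  ultimately show thesis using that by metis
qed

lemma right_stable_power:
  fixes p w :: "'a::monoid_mult"
  assumes "p = p * w"
  shows "p = p * w ^ k"
proof (induction k)
  case (Suc k)
  then show ?case using assms by (metis mult.assoc power_Suc2)
qed simp

lemma prod_list_in_ideal:
  assumes "two_sided_ideal I" "ys \<noteq> []" "set ys \<subseteq> I"
  shows "prod_list ys \<in> I"
  using assms by (cases ys) (auto intro: two_sided_idealD)

lemma idempotent_ideal_factorization:
  assumes "idempotent_ideal I" "x \<in> I"
  shows "\<exists>ys. length ys = Suc n \<and> set ys \<subseteq> I \<and> x = prod_list ys"
proof (induction n)
  case 0
  show ?case using assms(2) by (intro exI[of _ "[x]"]) simp
next
  case (Suc n)
  then obtain y ys where "length ys = n" "set (y # ys) \<subseteq> I" "x = y * prod_list ys"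
    by (metis length_Suc_conv prod_list.Cons)
  moreover have "y \<in> set_square I"
    using assms(1) \<open>set (y # ys) \<subseteq> I\<close> unfolding idempotent_ideal_def by auto
  then obtain a b where "a \<in> I" "b \<in> I" "y = a * b" unfolding set_square_def by blast
  ultimately show ?case by (intro exI[of _ "a # b # ys"]) (simp add: mult.assoc)
qed

lemma idempotent_ideal_in_principal_ideal:
  fixes x :: "'a::{monoid_mult, finite}"
  assumes I: "idempotent_ideal I" and "x \<in> I"
  obtains e where "e \<in> I" "e * e = e" "x \<in> principal_ideal e"
proof -
  obtain ys where ys: "length ys = card (UNIV :: 'a set)" "set ys \<subseteq> I" "x = prod_list ys"
    using idempotent_ideal_factorization[OF assms] by (metis Suc_pred' finite_UNIV_card_ge_0 finite_UNIV)
  obtain i j where ij: "i < j" "j \<le> card (UNIV :: 'a set)"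
    "prod_list (take i ys) = prod_list (take j ys)"
    using finite_type_repeat[of "\<lambda>k. prod_list (take k ys)"] by blast
  define p where "p = prod_list (take i ys)"
  define w where "w = prod_list (take (j - i) (drop i ys))"
  have "take j ys = take i ys @ take (j - i) (drop i ys)"
    using take_add[of i "j - i" ys] ij(1) by simp
  then have "p = p * w" using ij(3) unfolding p_def w_def by simp
  have "w \<in> I"
    unfolding w_def using I ij ys(1,2)
    by (intro prod_list_in_ideal) (auto simp: idempotent_ideal_two_sided dest: in_set_takeD in_set_dropD)
  obtain n where idem: "w ^ Suc n * w ^ Suc n = w ^ Suc n"
    by (rule finite_monoid_idempotent_power)
  define e where "e = w ^ Suc n"
  have e: "e * e = e" "p = p * e"
    unfolding e_def by (fact idem, rule right_stable_power[OF \<open>p = p * w\<close>])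
  have "x = p * e * prod_list (drop i ys)"
    using ys(3) e(2) unfolding p_def by (metis append_take_drop_id prod_list.append)
  then have "x \<in> principal_ideal e" unfolding principal_ideal_def by blast
  moreover have "e \<in> I"
    unfolding e_def using idempotent_ideal_two_sided[OF I] \<open>w \<in> I\<close> by (simp add: two_sided_idealD)
  ultimately show thesis using e(1) that by blast
qed

lemma idempotent_ideal_ii_meet: "idempotent_ideal (ii_meet I J)"
  unfolding ii_meet_def by (intro idempotent_ideal_Union) (auto intro: idempotent_ideal_principal_ideal)

lemma ii_meet_subset:
  assumes "two_sided_ideal I" "two_sided_ideal J"
  shows "ii_meet I J \<subseteq> I" "ii_meet I J \<subseteq> J"
  unfolding ii_meet_def using assms principal_ideal_subset by blast+

lemma subset_ii_meet:
  fixes K :: "'a::{monoid_mult, finite} set"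
  assumes "idempotent_ideal K" "K \<subseteq> I" "K \<subseteq> J"
  shows "K \<subseteq> ii_meet I J"
proof
  fix x assume "x \<in> K"
  then obtain e where "e \<in> K" "e * e = e" "x \<in> principal_ideal e"
    using idempotent_ideal_in_principal_ideal[OF assms(1)] by blast
  then show "x \<in> ii_meet I J" using assms(2,3) unfolding ii_meet_def by blast
qed

lemma ii_meet_Un_distrib: "ii_meet I (J \<union> K) = ii_meet I J \<union> ii_meet I K"
  unfolding ii_meet_def by auto

theorem corollary4p9:
  fixes dummy :: "'a::{monoid_mult, finite}"
  shows "(\<forall>I J :: 'a set. idempotent_ideal I \<and> idempotent_ideal J \<longrightarrow>
            idempotent_ideal (I \<union> J) \<and> I \<subseteq> I \<union> J \<and> J \<subseteq> I \<union> J \<and>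
            (\<forall>K. idempotent_ideal K \<and> I \<subseteq> K \<and> J \<subseteq> K \<longrightarrow> I \<union> J \<subseteq> K))
       \<and> (\<forall>I J :: 'a set. idempotent_ideal I \<and> idempotent_ideal J \<longrightarrow>
            idempotent_ideal (ii_meet I J) \<and> ii_meet I J \<subseteq> I \<and> ii_meet I J \<subseteq> J \<and>
            (\<forall>K. idempotent_ideal K \<and> K \<subseteq> I \<and> K \<subseteq> J \<longrightarrow> K \<subseteq> ii_meet I J))
       \<and> (\<forall>I J K :: 'a set. idempotent_ideal I \<and> idempotent_ideal J \<and> idempotent_ideal K \<longrightarrow>
            ii_meet I (J \<union> K) = ii_meet I J \<union> ii_meet I K)"
  by (simp add: idempotent_ideal_Un idempotent_ideal_ii_meet subset_ii_meet ii_meet_Un_distrib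
      ii_meet_subset[OF idempotent_ideal_two_sided idempotent_ideal_two_sided])

end
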